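(* Let $Q>1$, let $\gamma<1$ be the root of $t-\log t=1+\log Q$ with $\gamma<1$, and let $\Omega_Q=\{(x,y): x>0,\ 1\le xe^{-y}\le Q\}$. For $(x,y)\in\Omega_Q$ let $v=v(x,y)\le x$ be the root of $y=\frac{\gamma x}{v}+\log v-\gamma$, and set $B(x,y)=x\log v+\frac{x-v}{\gamma}$. Consider on $I=[0,1]$ the function $$w(t)=\begin{cases}v\left(\frac ta\right)^{\gamma-1},& t\in[0,a],\\ v,& t\in[a,1],\end{cases}$$ where $a$ is chosen so that $(\langle w\rangle_I,\langle\log w\rangle_I)=(x,y)$. Then $[w]_{A_\infty,[0,1]}\le Q$ and $B(x,y)=\langle w\log w\rangle_I$.
   Context: $\langle f\rangle_J=\frac1{|J|}\int_J f$. For a weight $w$ on $[0,1]$, $[w]_{A_\infty,[0,1]}=\sup_{J\subset[0,1]}\langle w\rangle_Je^{-\langle\log w\rangle_J}$, supremum over subintervals $J$. *)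

theory Defs
  imports "HOL-Analysis.Analysis"
begin

definition avg :: "real \<Rightarrow> real \<Rightarrow> (real \<Rightarrow> real) \<Rightarrow> real" where
  "avg c d f = (LBINT t:{c..d}. f t) / (d - c)"

definition Ainf01 :: "(real \<Rightarrow> real) \<Rightarrow> ereal" where
  "Ainf01 w = (SUP J \<in> {(c, d). 0 \<le> c \<and> c < d \<and> d \<le> 1}.
      ereal (avg (fst J) (snd J) w * exp (- avg (fst J) (snd J) (\<lambda>t. ln (w t)))))"

end

theory Submission
  imports Defs "HOL-Real_Asymp.Real_Asymp"
begin

text \<open>Write \<open>I(s) = \<integral>\<^sub>0\<^sup>s w\<close> and \<open>K(s) = \<integral>\<^sub>0\<^sup>s log w\<close>. With
  \<open>Q = exp (\<gamma> - 1) / \<gamma>\<close> (which is what \<open>\<gamma> - log \<gamma> = 1 + log Q\<close> says), the power part of \<open>w\<close> is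
  extremal: \<open>I(s) = Q s exp (K(s)/s)\<close> for \<open>s \<le> a\<close>, while on the constant part only
  \<open>I(s) \<le> Q s exp (K(s)/s)\<close> holds. Since \<open>(s, K) \<mapsto> s exp (K/s)\<close> is convex and
  positively homogeneous, it is subadditive; subtracting the equality at \<open>c\<close> from the
  inequality at \<open>d\<close> then bounds the \<open>A\<^sub>\<infinity>\<close> quotient of \<open>[c, d]\<close> by \<open>Q\<close>.\<close>

lemma exp_perspective_subadditive:
  fixes s t K L :: real
  assumes "0 < s" "0 < t"
  shows "(s + t) * exp ((K + L) / (s + t)) \<le> s * exp (K / s) + t * exp (L / t)"
proof -
  define M where "M = (K + L) / (s + t)"
  have tangent: "exp M * (1 + (z - M)) \<le> exp z" for z
  proof -
    have "exp M * (1 + (z - M)) \<le> exp M * exp (z - M)"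
      by (intro mult_left_mono exp_ge_add_one_self) auto
    then show ?thesis by (simp add: exp_diff)
  qed
  have "(s + t) * M = K + L"
    using assms by (simp add: M_def)
  then have "s * M + t * M = K + L"
    by (simp add: distrib_right)
  moreover have "s * (1 + (K / s - M)) = s + K - s * M" "t * (1 + (L / t - M)) = t + L - t * M"
    using assms by (simp_all add: field_simps)
  ultimately have "s * (1 + (K / s - M)) + t * (1 + (L / t - M)) = s + t"
    by linarith
  then have "(s + t) * exp M = s * (exp M * (1 + (K / s - M))) + t * (exp M * (1 + (L / t - M)))"
    by (metis (no_types, lifting) distrib_left mult.commute mult.left_commute)
  also have "\<dots> \<le> s * exp (K / s) + t * exp (L / t)"
    using tangent assms by (intro add_mono mult_left_mono) auto
  finally show ?thesis unfolding M_def .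
qed

lemma quotient_le_from_extremal_endpoint:
  fixes c d Q Ic Id Kc Kd :: real
  assumes "0 < c" "c < d" "0 \<le> Q"
    and "Ic = Q * c * exp (Kc / c)" "Id \<le> Q * d * exp (Kd / d)"
  shows "(Id - Ic) / (d - c) * exp (- ((Kd - Kc) / (d - c))) \<le> Q"
proof -
  define m where "m = (Kd - Kc) / (d - c)"
  have "d * exp (Kd / d) \<le> c * exp (Kc / c) + (d - c) * exp m"
    using exp_perspective_subadditive[of c "d - c" Kc "Kd - Kc"] assms by (simp add: m_def)
  then have "Id - Ic \<le> Q * (d - c) * exp m"
    using assms mult_left_mono[of _ _ Q] by (smt (verit, best) mult.assoc distrib_left)
  then have "(Id - Ic) / (d - c) \<le> Q * exp m"
    using assms by (simp add: divide_le_eq mult_ac)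
  then have "(Id - Ic) / (d - c) * exp (- m) \<le> Q * exp m * exp (- m)"
    by (intro mult_right_mono) auto
  also have "Q * exp m * exp (- m) = Q" by (simp add: exp_minus)
  finally show ?thesis unfolding m_def .
qed

lemma mult_ln_ge_minus_one:
  fixes x :: real
  assumes "0 \<le> x"
  shows "- 1 \<le> x * ln x"
proof (cases "x = 0")
  case False
  then have "ln (1 / x) \<le> 1 / x - 1" using assms by (intro ln_le_minus_one) auto
  then have "1 - 1 / x \<le> ln x" using False assms by (simp add: ln_div)
  then have "x * (1 - 1 / x) \<le> x * ln x" using assms by (intro mult_left_mono)
  then show ?thesis using False assms by (simp add: algebra_simps)
qed simp

lemma absolutely_integrable_on_bounded_below:
  fixes f :: "real \<Rightarrow> real"
  assumes "f integrable_on {c..d}" "\<And>t. t \<in> {c..d} \<Longrightarrow> m \<le> f t"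
  shows "f absolutely_integrable_on {c..d}"
proof -
  have "(\<lambda>t. f t - m) absolutely_integrable_on {c..d}"
    using assms by (intro nonnegative_absolutely_integrable_1 integrable_diff) auto
  then have "(\<lambda>t. (f t - m) + m) absolutely_integrable_on {c..d}"
    by (intro set_integral_add absolutely_integrable_on_const) auto
  then show ?thesis by simp
qed

lemma avg_eq_integral:
  fixes f :: "real \<Rightarrow> real"
  assumes "f absolutely_integrable_on {c..d}" "f \<in> borel_measurable borel"
  shows "avg c d f = integral {c..d} f / (d - c)"
proof -
  have "set_integrable lborel {c..d} f"
    using assms unfolding set_integrable_def
    by (subst (asm) integrable_completion) auto
  then show ?thesis
    unfolding avg_def by (simp add: set_borel_integral_eq_integral)
qed

lemma avg_eq_primitive_quotient:
  fixes f F :: "real \<Rightarrow> real"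
  assumes "f absolutely_integrable_on {c..d}" "f \<in> borel_measurable borel" "0 \<le> c" "c \<le> d"
    and "(f has_integral F c) {0..c}" "(f has_integral F d) {0..d}"
  shows "avg c d f = (F d - F c) / (d - c)"
proof -
  have "(f has_integral F c + integral {c..d} f) {0..d}"
    using assms by (intro has_integral_combine[OF _ _ assms(5)] integrable_integral
        integrable_subinterval_real[OF has_integral_integrable[OF assms(6)]]) auto
  then have "integral {c..d} f = F d - F c"
    using has_integral_unique[OF _ assms(6)] by fastforce
  then show ?thesis using avg_eq_integral[OF assms(1,2)] by simp
qed

lemma tendsto_powr_mult_ln_at_right_0:
  fixes p :: real
  assumes "0 < p"
  shows "((\<lambda>t. t powr p * ln t) \<longlongrightarrow> 0) (at_right 0)"
  using assms by real_asymp

lemma continuous_on_powr_mult_ln: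
  fixes p :: real
  assumes "0 < p"
  shows "continuous_on {0..} (\<lambda>t. t powr p * ln t)"
proof -
  have "continuous (at t within {0..}) (\<lambda>t. t powr p * ln t)" if "0 \<le> t" for t
  proof (cases "t = 0")
    case True
    then show ?thesis using tendsto_powr_mult_ln_at_right_0[OF assms]
      by (simp add: continuous_within at_within_Ici_at_right)
  next
    case False
    then have "isCont (\<lambda>t. t powr p * ln t) t" using that by (intro continuous_intros) auto
    then show ?thesis by (rule continuous_at_imp_continuous_within)
  qed
  then show ?thesis by (simp add: continuous_on_eq_continuous_within)
qed

lemma has_integral_scaled_powr:
  fixes a p s :: real
  assumes "0 < a" "0 < p" "0 \<le> s"
  shows "((\<lambda>t. (t / a) powr (p - 1)) has_integral a / p * (s / a) powr p) {0..s}"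
proof -
  have "((\<lambda>t. (t / a) powr (p - 1)) has_integral
      a / p * (s / a) powr p - a / p * (0 / a) powr p) {0..s}"
  proof (rule fundamental_theorem_of_calculus_interior)
    show "continuous_on {0..s} (\<lambda>t. a / p * (t / a) powr p)"
      using assms by (intro continuous_intros continuous_on_powr') auto
    fix t assume t: "t \<in> {0<..<s}"
    have "((\<lambda>t. a / p * (t / a) powr p) has_real_derivative
        a / p * (p * (t / a) powr (p - 1) * (1 / a))) (at t)"
      using t assms by (auto intro!: derivative_eq_intros)
    then show "((\<lambda>t. a / p * (t / a) powr p) has_vector_derivative (t / a) powr (p - 1)) (at t)"
      using assms by (simp add: has_real_derivative_iff_has_vector_derivative)
  qed (use assms in auto)
  then show ?thesis by simp
qed

lemma has_integral_scaled_powr_mult_ln: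
  fixes a p s :: real
  assumes "0 < a" "0 < p" "0 \<le> s"
  shows "((\<lambda>t. (t / a) powr (p - 1) * ln (t / a)) has_integral
      a * ((s / a) powr p * ln (s / a) / p - (s / a) powr p / p\<^sup>2)) {0..s}"
proof -
  define F where "F t = a * ((t / a) powr p * ln (t / a) / p - (t / a) powr p / p\<^sup>2)" for t
  have "((\<lambda>t. (t / a) powr (p - 1) * ln (t / a)) has_integral F s - F 0) {0..s}"
  proof (rule fundamental_theorem_of_calculus_interior)
    have "continuous_on {0..s} (\<lambda>t. (t / a) powr p * ln (t / a))"
      by (rule continuous_on_compose2[OF continuous_on_powr_mult_ln[OF assms(2)]])
         (use assms in \<open>auto intro!: continuous_intros\<close>)
    moreover have "continuous_on {0..s} (\<lambda>t. (t / a) powr p)"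
      using assms by (intro continuous_on_powr' continuous_intros) auto
    ultimately show "continuous_on {0..s} F"
      unfolding F_def using assms by (intro continuous_on_mult_left continuous_on_diff continuous_on_divide
          continuous_on_const) auto
    fix t assume t: "t \<in> {0<..<s}"
    have u: "0 < t / a" using t assms by simp
    have "(F has_real_derivative a * ((p * (t / a) powr (p - 1) * (1 / a) * ln (t / a)
        + (t / a) powr p * (1 / a / (t / a))) / p - p * (t / a) powr (p - 1) * (1 / a) / p\<^sup>2)) (at t)"
      unfolding F_def using u assms by (auto intro!: derivative_eq_intros simp: power2_eq_square)
    moreover have "(t / a) powr p = t / a * (t / a) powr (p - 1)"
      using powr_mult_base[of "t / a" "p - 1"] u by simp
    then have "a * ((p * (t / a) powr (p - 1) * (1 / a) * ln (t / a)
        + (t / a) powr p * (1 / a / (t / a))) / p - p * (t / a) powr (p - 1) * (1 / a) / p\<^sup>2)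
        = (t / a) powr (p - 1) * ln (t / a)"
      using assms u by (simp add: field_simps power2_eq_square)
    ultimately show "(F has_vector_derivative (t / a) powr (p - 1) * ln (t / a)) (at t)"
      by (simp add: has_real_derivative_iff_has_vector_derivative)
  qed (use assms in auto)
  then show ?thesis using assms by (simp add: F_def)
qed

lemma has_integral_ln_scaled:
  fixes a s :: real
  assumes "0 < a" "0 \<le> s"
  shows "((\<lambda>t. ln (t / a)) has_integral s * ln (s / a) - s) {0..s}"
proof -
  have "((\<lambda>t. (t / a) powr (1 - 1) * ln (t / a)) has_integral
      a * ((s / a) powr 1 * ln (s / a) / 1 - (s / a) powr 1 / 1\<^sup>2)) {0..s}"
    by (rule has_integral_scaled_powr_mult_ln) (use assms in auto)
  moreover have "a * ((s / a) powr 1 * ln (s / a) / 1 - (s / a) powr 1 / 1\<^sup>2) = s * ln (s / a) - s"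
    using assms by (simp add: powr_one field_simps)
  ultimately have "((\<lambda>t. (t / a) powr (1 - 1) * ln (t / a)) has_integral s * ln (s / a) - s) {0..s}"
    by (simp only:)
  then show ?thesis
    using assms by (subst has_integral_spike_finite_eq[of "{0}"]) auto
qed

lemma has_integral_const_right_of:
  fixes f :: "real \<Rightarrow> real"
  assumes "a \<le> s" "\<And>t. a < t \<Longrightarrow> f t = c"
  shows "(f has_integral c * (s - a)) {a..s}"
proof -
  have "((\<lambda>t. c) has_integral c * (s - a)) {a..s}"
    using has_integral_const_real[of c a s] assms by (simp add: mult.commute)
  then show ?thesis
    using assms by (subst has_integral_spike_finite_eq[of "{a}"]) auto
qed

definition extremal_weight :: "real \<Rightarrow> real \<Rightarrow> real \<Rightarrow> real \<Rightarrow> real" where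
  "extremal_weight g v a t = (if t \<le> a then v * (t / a) powr (g - 1) else v)"

definition prim_w :: "real \<Rightarrow> real \<Rightarrow> real \<Rightarrow> real \<Rightarrow> real" where
  "prim_w g v a s = (if s \<le> a then v * a / g * (s / a) powr g else v * a / g + v * (s - a))"

definition prim_ln_w :: "real \<Rightarrow> real \<Rightarrow> real \<Rightarrow> real \<Rightarrow> real" where
  "prim_ln_w g v a s =
    (if s \<le> a then s * ln v + (g - 1) * (s * ln (s / a) - s) else s * ln v - (g - 1) * a)"

definition extremal_constant :: "real \<Rightarrow> real" where
  "extremal_constant g = exp (g - 1) / g"

lemma extremal_constant_ge_1: "0 < g \<Longrightarrow> 1 \<le> extremal_constant g"
  using exp_ge_add_one_self[of "g - 1"] by (simp add: extremal_constant_def)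

context
  fixes g v a :: real
  assumes g: "0 < g" and v: "0 < v" and a: "0 \<le> a"
begin

abbreviation w :: "real \<Rightarrow> real" where
  "w \<equiv> extremal_weight g v a"

lemma extremal_weight_nonneg: "0 \<le> w t"
  using v by (simp add: extremal_weight_def)

lemma extremal_weight_constant_part: "a < t \<Longrightarrow> w t = v"
  by (simp add: extremal_weight_def)

lemma ln_extremal_weight_power_part:
  "0 < t \<Longrightarrow> t \<le> a \<Longrightarrow> ln (w t) = ln v + (g - 1) * ln (t / a)"
  using v by (simp add: extremal_weight_def ln_mult)

lemma has_integral_extremal_weight_power_part:
  assumes "0 \<le> s" "s \<le> a"
  shows "(w has_integral v * a / g * (s / a) powr g) {0..s}"
proof (cases "s = 0")
  case True
  then show ?thesis using has_integral_refl(2)[of w 0] by simp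
next
  case False
  then have "0 < a" using assms by simp
  have "((\<lambda>t. v * (t / a) powr (g - 1)) has_integral v * a / g * (s / a) powr g) {0..s}"
    using has_integral_mult_right[OF has_integral_scaled_powr[OF \<open>0 < a\<close> g assms(1)], of v]
    by (simp add: mult.assoc)
  then show ?thesis
    using assms by (subst has_integral_cong[where g = "\<lambda>t. v * (t / a) powr (g - 1)"])
      (auto simp: extremal_weight_def)
qed

lemma has_integral_extremal_weight:
  assumes "0 \<le> s"
  shows "(w has_integral prim_w g v a s) {0..s}"
proof (cases "s \<le> a")
  case True
  then show ?thesis
    using has_integral_extremal_weight_power_part assms by (simp add: prim_w_def)
next
  case False
  have power_part: "v * a / g * (a / a) powr g = v * a / g"
    using a by (cases "a = 0") auto
  have "(w has_integral v * a / g * (a / a) powr g + v * (s - a)) {0..s}"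
    by (rule has_integral_combine[OF a _ has_integral_extremal_weight_power_part[OF a order_refl]
          has_integral_const_right_of])
      (use False extremal_weight_constant_part in auto)
  then show ?thesis
    using False unfolding power_part prim_w_def by simp
qed

lemma has_integral_ln_extremal_weight_power_part:
  assumes "0 \<le> s" "s \<le> a"
  shows "((\<lambda>t. ln (w t)) has_integral s * ln v + (g - 1) * (s * ln (s / a) - s)) {0..s}"
proof (cases "s = 0")
  case True
  then show ?thesis using has_integral_refl(2)[of "\<lambda>t. ln (w t)" 0] by simp
next
  case False
  then have "0 < a" using assms by simp
  have "((\<lambda>t. ln v + (g - 1) * ln (t / a)) has_integral s * ln v + (g - 1) * (s * ln (s / a) - s))
      {0..s}"
    using has_integral_add[OF has_integral_const_real[of "ln v" 0 s]
        has_integral_mult_right[OF has_integral_ln_scaled[OF \<open>0 < a\<close> assms(1)], of "g - 1"]]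
      assms by (simp add: mult.commute)
  then show ?thesis
    using assms ln_extremal_weight_power_part
    by (subst has_integral_spike_finite_eq[of "{0}"]) auto
qed

lemma has_integral_ln_extremal_weight:
  assumes "0 \<le> s"
  shows "((\<lambda>t. ln (w t)) has_integral prim_ln_w g v a s) {0..s}"
proof (cases "s \<le> a")
  case True
  then show ?thesis
    using has_integral_ln_extremal_weight_power_part assms by (simp add: prim_ln_w_def)
next
  case False
  have power_part: "a * ln v + (g - 1) * (a * ln (a / a) - a) = a * ln v - (g - 1) * a"
    using a by (cases "a = 0") auto
  have "((\<lambda>t. ln (w t)) has_integral
      a * ln v + (g - 1) * (a * ln (a / a) - a) + ln v * (s - a)) {0..s}"
    by (rule has_integral_combine[OF a _ has_integral_ln_extremal_weight_power_part[OF a order_refl]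
          has_integral_const_right_of])
      (use False extremal_weight_constant_part in auto)
  then show ?thesis
    using False unfolding power_part prim_ln_w_def by (simp add: algebra_simps)
qed

lemma has_integral_extremal_weight_mult_ln_power_part:
  "((\<lambda>t. w t * ln (w t)) has_integral v * ln v * a / g - v * (g - 1) * a / g\<^sup>2) {0..a}"
proof (cases "a = 0")
  case True
  then show ?thesis using has_integral_refl(2)[of "\<lambda>t. w t * ln (w t)" 0] by simp
next
  case False
  then have "0 < a" using a by simp
  have "((\<lambda>t. v * ln v * (t / a) powr (g - 1) + v * (g - 1) * ((t / a) powr (g - 1) * ln (t / a)))
      has_integral v * ln v * (a / g * (a / a) powr g)
        + v * (g - 1) * (a * ((a / a) powr g * ln (a / a) / g - (a / a) powr g / g\<^sup>2))) {0..a}"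
    by (intro has_integral_add has_integral_mult_right has_integral_scaled_powr
        has_integral_scaled_powr_mult_ln \<open>0 < a\<close> g a)
  then have "((\<lambda>t. v * ln v * (t / a) powr (g - 1) + v * (g - 1) * ((t / a) powr (g - 1) * ln (t / a)))
      has_integral v * ln v * a / g - v * (g - 1) * a / g\<^sup>2) {0..a}"
    using \<open>0 < a\<close> by (simp add: field_simps)
  moreover have "w t * ln (w t) = v * ln v * (t / a) powr (g - 1)
      + v * (g - 1) * ((t / a) powr (g - 1) * ln (t / a))" if "t \<in> {0..a} - {0}" for t
  proof -
    have "ln (w t) = ln v + (g - 1) * ln (t / a)"
      using that ln_extremal_weight_power_part[of t] by simp
    moreover have "w t = v * (t / a) powr (g - 1)"
      using that by (simp add: extremal_weight_def)
    ultimately have "w t * ln (w t) = v * (t / a) powr (g - 1) * (ln v + (g - 1) * ln (t / a))"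
      by metis
    then show ?thesis by (simp add: algebra_simps)
  qed
  ultimately show ?thesis
    by (subst has_integral_spike_finite_eq[of "{0}"]) auto
qed

lemma has_integral_extremal_weight_mult_ln:
  assumes "a \<le> 1"
  shows "((\<lambda>t. w t * ln (w t)) has_integral
      v * ln v * (a / g + (1 - a)) - v * (g - 1) * a / g\<^sup>2) {0..1}"
proof -
  have "((\<lambda>t. w t * ln (w t)) has_integral
      v * ln v * a / g - v * (g - 1) * a / g\<^sup>2 + v * ln v * (1 - a)) {0..1}"
    by (rule has_integral_combine[OF a assms has_integral_extremal_weight_mult_ln_power_part
          has_integral_const_right_of])
      (use assms extremal_weight_constant_part in auto)
  then show ?thesis by (simp add: algebra_simps)
qed

lemma ln_extremal_weight_ge:
  assumes "g \<le> 1" "0 \<le> t"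
  shows "min 0 (ln v) \<le> ln (w t)"
proof -
  consider "t = 0" | "0 < t" "t \<le> a" | "a < t" using assms by linarith
  then show ?thesis
  proof cases
    case 1
    \<comment> \<open>\<open>w 0 = 0\<close> because \<open>0 powr _ = 0\<close>, and \<open>ln 0 = 0\<close>\<close>
    then show ?thesis by (simp add: extremal_weight_def)
  next
    case 2
    then have "0 \<le> (g - 1) * ln (t / a)"
      using assms by (intro mult_nonpos_nonpos) auto
    then show ?thesis using ln_extremal_weight_power_part 2 by simp
  next
    case 3
    then show ?thesis using extremal_weight_constant_part by simp
  qed
qed

lemma extremal_weight_measurable:
  "w \<in> borel_measurable borel" "(\<lambda>t. ln (w t)) \<in> borel_measurable borel"
  "(\<lambda>t. w t * ln (w t)) \<in> borel_measurable borel"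
proof -
  have w: "w = (\<lambda>t. if t \<le> a then v * (t / a) powr (g - 1) else v)"
    by (simp add: extremal_weight_def fun_eq_iff)
  show "w \<in> borel_measurable borel" "(\<lambda>t. ln (w t)) \<in> borel_measurable borel"
    "(\<lambda>t. w t * ln (w t)) \<in> borel_measurable borel"
    unfolding w by measurable
qed

lemma prim_w_eq_extremal:
  assumes "0 < s" "s \<le> a"
  shows "prim_w g v a s = extremal_constant g * s * exp (prim_ln_w g v a s / s)"
proof -
  have "prim_ln_w g v a s / s = ln v + (g - 1) * ln (s / a) - (g - 1)"
    using assms by (simp add: prim_ln_w_def field_simps)
  then have "exp (prim_ln_w g v a s / s) = v * (s / a) powr (g - 1) / exp (g - 1)"
    using v assms by (simp add: exp_add exp_diff powr_def mult.commute)
  moreover have "(s / a) powr g = s / a * (s / a) powr (g - 1)"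
    using powr_mult_base[of "s / a" "g - 1"] assms by simp
  ultimately show ?thesis
    using assms g by (simp add: prim_w_def extremal_constant_def field_simps)
qed

lemma prim_w_le_extremal:
  assumes "a < s"
  shows "prim_w g v a s \<le> extremal_constant g * s * exp (prim_ln_w g v a s / s)"
proof -
  define r where "r = (g - 1) - (g - 1) * a / s"
  have s: "0 < s" using a assms by linarith
  have "prim_w g v a s = v * s / g * (1 + r)"
    using assms s g by (simp add: prim_w_def r_def field_simps)
  also have "\<dots> \<le> v * s / g * exp r"
    using v s g by (intro mult_left_mono exp_ge_add_one_self) auto
  also have "\<dots> = s / g * exp (ln v + r)"
    using v by (simp add: exp_add)
  also have "ln v + r = (g - 1) + prim_ln_w g v a s / s"
    using assms s by (simp add: prim_ln_w_def r_def field_simps)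
  also have "s / g * exp \<dots> = extremal_constant g * s * exp (prim_ln_w g v a s / s)"
    by (simp add: extremal_constant_def exp_add)
  finally show ?thesis .
qed

lemma prim_quotient_le_extremal_constant:
  assumes "0 \<le> c" "c < d"
  shows "(prim_w g v a d - prim_w g v a c) / (d - c)
      * exp (- ((prim_ln_w g v a d - prim_ln_w g v a c) / (d - c))) \<le> extremal_constant g"
proof -
  have Q: "1 \<le> extremal_constant g" using extremal_constant_ge_1 g .
  have at_d: "prim_w g v a d \<le> extremal_constant g * d * exp (prim_ln_w g v a d / d)"
    using prim_w_eq_extremal[of d] prim_w_le_extremal[of d] assms by fastforce
  consider "c = 0" | "0 < c" "c \<le> a" | "a < c" using assms by linarith
  then show ?thesis
  proof cases
    case 1
    then have "(prim_w g v a d - prim_w g v a c) / (d - c)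
        * exp (- ((prim_ln_w g v a d - prim_ln_w g v a c) / (d - c)))
        = prim_w g v a d / d * exp (- (prim_ln_w g v a d / d))"
      using a by (simp add: prim_w_def prim_ln_w_def)
    also have "\<dots> \<le> extremal_constant g * d * exp (prim_ln_w g v a d / d) / d
        * exp (- (prim_ln_w g v a d / d))"
      using at_d assms by (intro mult_right_mono divide_right_mono) auto
    also have "\<dots> = extremal_constant g"
      using assms 1 by (simp add: exp_minus)
    finally show ?thesis .
  next
    case 2
    then show ?thesis
      using quotient_le_from_extremal_endpoint[OF _ assms(2) _ prim_w_eq_extremal at_d] Q by simp
  next
    case 3
    then have "prim_w g v a d - prim_w g v a c = v * (d - c)"
      "prim_ln_w g v a d - prim_ln_w g v a c = (d - c) * ln v"
      using assms by (auto simp: prim_w_def prim_ln_w_def algebra_simps)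
    then show ?thesis using Q assms v by (simp add: exp_minus)
  qed
qed

lemma extremal_weight_absolutely_integrable:
  assumes "a \<le> 1"
  shows "w absolutely_integrable_on {0..1}"
    and "g \<le> 1 \<Longrightarrow> (\<lambda>t. ln (w t)) absolutely_integrable_on {0..1}"
    and "(\<lambda>t. w t * ln (w t)) absolutely_integrable_on {0..1}"
proof -
  show "w absolutely_integrable_on {0..1}"
    using has_integral_extremal_weight[of 1] extremal_weight_nonneg
    by (intro absolutely_integrable_on_bounded_below[where m = 0]) (auto intro: has_integral_integrable)
  show "(\<lambda>t. ln (w t)) absolutely_integrable_on {0..1}" if "g \<le> 1"
    using has_integral_ln_extremal_weight[of 1] ln_extremal_weight_ge[OF that]
    by (intro absolutely_integrable_on_bounded_below[where m = "min 0 (ln v)"])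
      (auto intro: has_integral_integrable)
  show "(\<lambda>t. w t * ln (w t)) absolutely_integrable_on {0..1}"
    using has_integral_extremal_weight_mult_ln[OF assms] mult_ln_ge_minus_one extremal_weight_nonneg
    by (intro absolutely_integrable_on_bounded_below[where m = "- 1"])
      (auto intro: has_integral_integrable)
qed

lemma Ainf01_extremal_weight_le:
  assumes "g \<le> 1" "a \<le> 1"
  shows "Ainf01 w \<le> ereal (extremal_constant g)"
  unfolding Ainf01_def
proof (rule SUP_least)
  fix J :: "real \<times> real"
  assume "J \<in> {(c, d). 0 \<le> c \<and> c < d \<and> d \<le> 1}"
  then obtain c d where J: "J = (c, d)" "0 \<le> c" "c < d" "d \<le> 1" by auto
  have sub: "{c..d} \<subseteq> {0..1}" using J by auto
  have "avg c d w = (prim_w g v a d - prim_w g v a c) / (d - c)"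
    using J extremal_weight_measurable
    by (intro avg_eq_primitive_quotient has_integral_extremal_weight
        absolutely_integrable_on_subinterval[OF extremal_weight_absolutely_integrable(1)[OF assms(2)] sub])
      auto
  moreover have "avg c d (\<lambda>t. ln (w t)) = (prim_ln_w g v a d - prim_ln_w g v a c) / (d - c)"
    using J extremal_weight_measurable
    by (intro avg_eq_primitive_quotient has_integral_ln_extremal_weight
        absolutely_integrable_on_subinterval[OF extremal_weight_absolutely_integrable(2)[OF assms(2,1)] sub])
      auto
  ultimately show "ereal (avg (fst J) (snd J) w * exp (- avg (fst J) (snd J) (\<lambda>t. ln (w t))))
      \<le> ereal (extremal_constant g)"
    using prim_quotient_le_extremal_constant[OF J(2,3)] J(1) by simp
qed

lemma avg_extremal_weight:
  assumes "a \<le> 1"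
  shows "avg 0 1 w = v * a / g + v * (1 - a)"
proof -
  have "avg 0 1 w = (prim_w g v a 1 - prim_w g v a 0) / (1 - 0)"
    by (intro avg_eq_primitive_quotient extremal_weight_absolutely_integrable(1)[OF assms]
        extremal_weight_measurable(1) has_integral_extremal_weight) auto
  then show ?thesis using a assms by (cases "a = 1") (auto simp: prim_w_def)
qed

lemma avg_extremal_weight_mult_ln:
  assumes "a \<le> 1"
  shows "avg 0 1 (\<lambda>t. w t * ln (w t)) = v * ln v * (a / g + (1 - a)) - v * (g - 1) * a / g\<^sup>2"
  using avg_eq_integral[OF extremal_weight_absolutely_integrable(3)[OF assms]
      extremal_weight_measurable(3)] integral_unique[OF has_integral_extremal_weight_mult_ln[OF assms]]
  by simp

end

lemma extremal_constant_eq: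
  fixes Q \<gamma> :: real
  assumes "0 < Q" "0 < \<gamma>" "\<gamma> - ln \<gamma> = 1 + ln Q"
  shows "Q = extremal_constant \<gamma>"
proof -
  have "ln Q = (\<gamma> - 1) - ln \<gamma>" using assms(3) by simp
  then have "exp (ln Q) = exp (\<gamma> - 1) / exp (ln \<gamma>)" by (simp add: exp_diff)
  then show ?thesis using assms by (simp add: extremal_constant_def)
qed

theorem mainTheorem8:
  fixes Q \<gamma> x y v a :: real and w :: "real \<Rightarrow> real"
  assumes hQ: "Q > 1"
    and h\<gamma>: "\<gamma> < 1" "0 < \<gamma>" "\<gamma> - ln \<gamma> = 1 + ln Q"
    and hx: "x > 0" "1 \<le> x * exp (- y)" "x * exp (- y) \<le> Q"
    and hv: "0 < v" "v \<le> x" "y = \<gamma> * x / v + ln v - \<gamma>"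
    and ha: "0 \<le> a" "a \<le> 1"
    and hw: "\<And>t. w t = (if t \<le> a then v * (t / a) powr (\<gamma> - 1) else v)"
    and havg: "avg 0 1 w = x" "avg 0 1 (\<lambda>t. ln (w t)) = y"
  shows "Ainf01 w \<le> ereal Q \<and> x * ln v + (x - v) / \<gamma> = avg 0 1 (\<lambda>t. w t * ln (w t))"
proof -
  have w: "w = extremal_weight \<gamma> v a"
    using hw by (simp add: extremal_weight_def fun_eq_iff)
  have Q: "Q = extremal_constant \<gamma>"
    using extremal_constant_eq hQ h\<gamma> by simp
  have x: "x = v * a / \<gamma> + v * (1 - a)"
    using avg_extremal_weight[OF h\<gamma>(2) hv(1) ha] havg(1) w by simp
  have "x * ln v + (x - v) / \<gamma> = v * ln v * (a / \<gamma> + (1 - a)) - v * (\<gamma> - 1) * a / \<gamma>\<^sup>2"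
    unfolding x using h\<gamma>(2) by (simp add: field_simps power2_eq_square)
  then show ?thesis
    using Ainf01_extremal_weight_le[OF h\<gamma>(2) hv(1) ha(1) _ ha(2)]
      avg_extremal_weight_mult_ln[OF h\<gamma>(2) hv(1) ha] h\<gamma>(1) Q w by simp
qed

end
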